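(* Let $\mathfrak g$ be a Kac–Moody algebra with Dynkin diagram $\Gamma$ and Weyl group $W$, and let $(u,v)\in W\times W$. Then the Berenstein–Fomin–Zelevinsky quiver $Q^{u,v}$, drawn on the cylinder $\Gamma\times\mathbb{R}$ in the standard way, is planar in each sheet: within any sheet, no two arrows of $Q^{u,v}$ cross.
   Context: Let $\Gamma$ have vertex set $[1,r]$ and generalized Cartan matrix $(a_{ij})$; vertices $i\neq j$ are adjacent in $\Gamma$ iff $a_{ij}<0$. $W$ is generated by the simple reflections $s_1,\dots,s_r$. BFZ quiver. Write a reduced word for $u$ using the negative indices $-1,\dots,-r$ (the letter $-j$ standing for $s_j$) and a reduced word for $v$ using positive indices, and let $\mathbf i=(i_1,\dots,i_m)$, $m=\ell(u)+\ell(v)$, be any shuffle of the two. Put $i_{-j}=-j$ for $j\in[1,r]$. For $k\in[-r,-1]\cup[1,m]$ let $k^+$ be the smallest $l>k$ with $|i_l|=|i_k|$, or $k^+=m+1$ if there is none. Let $\varepsilon(i)\in\{\pm1\}$ be the sign of $i$. An index $k$ is $\mathbf i$-exchangeable if both $k,k^+\in[-r,-1]\cup[1,m]$. The quiver $Q^{u,v}$ has vertex set $[-r,-1]\cup[1,m]$; for $k<l$ there is an arrow between $k$ and $l$ iff at least one of $k,l$ is exchangeable and one of: (horizontal) $l=k^+$, directed $k\to l$ iff $\varepsilon(i_l)=+1$; (inclined) $|i_k|,|i_l|$ adjacent in $\Gamma$ and either $l<k^+<l^+$ with $\varepsilon(i_l)=\varepsilon(i_{k^+})$, or $l<l^+<k^+$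 with $\varepsilon(i_l)=-\varepsilon(i_{l^+})$; an inclined arrow is directed $k\to l$ iff $\varepsilon(i_l)=-1$. Cylinder. The cylinder over $\Gamma$ (as a topological graph) is $\Gamma\times\mathbb{R}$; $\{x\}\times\mathbb{R}$ for a vertex $x$ is a string. An endpoint of $\Gamma$ is a vertex with one incident edge, a branching point one with more than two; a branch $\Gamma_{m,n}$ is a path between two vertices each of which is an endpoint or branching point, and $\Gamma_{m,n}\times\mathbb{R}$ is the sheet over it. The standard drawing places vertex $k$ of $Q^{u,v}$ at the point $(|i_k|,k)$ on the string over $|i_k|$ and draws arrows as straight segments (horizontal arrows on strings, inclined arrows between adjacent strings). *)

theory Defs
  imports Complex_Main
begin

text \<open>Vertices of \<Gamma> are 1..r; the GCM is A i j for i j in 1..r.\<close>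

definition is_GCM :: "nat \<Rightarrow> (nat \<Rightarrow> nat \<Rightarrow> int) \<Rightarrow> bool" where
  "is_GCM r A \<longleftrightarrow>
     (\<forall>i\<in>{1..r}. A i i = 2) \<and>
     (\<forall>i\<in>{1..r}. \<forall>j\<in>{1..r}. i \<noteq> j \<longrightarrow> A i j \<le> 0) \<and>
     (\<forall>i\<in>{1..r}. \<forall>j\<in>{1..r}. A i j = 0 \<longleftrightarrow> A j i = 0)"

definition dyn_adj :: "nat \<Rightarrow> (nat \<Rightarrow> nat \<Rightarrow> int) \<Rightarrow> nat \<Rightarrow> nat \<Rightarrow> bool" where
  "dyn_adj r A x y \<longleftrightarrow> x \<in> {1..r} \<and> y \<in> {1..r} \<and> x \<noteq> y \<and> A x y < 0"

definition dyn_deg :: "nat \<Rightarrow> (nat \<Rightarrow> nat \<Rightarrow> int) \<Rightarrow> nat \<Rightarrow> nat" where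
  "dyn_deg r A x = card {y. dyn_adj r A x y}"

text \<open>Simple reflection s_i acting on the root lattice (coefficients w.r.t. simple roots):
  s_i(alpha_j) = alpha_j - a_ij alpha_i.  The Weyl group W is the group generated by these.\<close>
definition simple_refl :: "nat \<Rightarrow> (nat \<Rightarrow> nat \<Rightarrow> int) \<Rightarrow> nat \<Rightarrow> (nat \<Rightarrow> int) \<Rightarrow> (nat \<Rightarrow> int)" where
  "simple_refl r A i c = c(i := c i - (\<Sum>j\<in>{1..r}. A i j * c j))"

definition word_action :: "nat \<Rightarrow> (nat \<Rightarrow> nat \<Rightarrow> int) \<Rightarrow> nat list \<Rightarrow> (nat \<Rightarrow> int) \<Rightarrow> (nat \<Rightarrow> int)" where
  "word_action r A w = foldr (\<lambda>i f. simple_refl r A i \<circ> f) w id"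

definition is_word :: "nat \<Rightarrow> nat list \<Rightarrow> bool" where
  "is_word r w \<longleftrightarrow> set w \<subseteq> {1..r}"

definition reduced_word :: "nat \<Rightarrow> (nat \<Rightarrow> nat \<Rightarrow> int) \<Rightarrow> nat list \<Rightarrow> bool" where
  "reduced_word r A w \<longleftrightarrow> is_word r w \<and>
     (\<forall>w'. is_word r w' \<and> word_action r A w' = word_action r A w \<longrightarrow> length w \<le> length w')"

definition qv_set :: "nat \<Rightarrow> nat \<Rightarrow> int set" where
  "qv_set r m = {- int r .. -1} \<union> {1 .. int m}"

text \<open>i_k, with the convention i_{-j} = -j.\<close>
definition letter :: "int list \<Rightarrow> int \<Rightarrow> int" where
  "letter w k = (if k < 0 then k else w ! (nat k - 1))"

definition nxt :: "nat \<Rightarrow> int list \<Rightarrow> int \<Rightarrow> int" where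
  "nxt r w k = (if \<exists>l. l \<in> qv_set r (length w) \<and> k < l \<and> \<bar>letter w l\<bar> = \<bar>letter w k\<bar>
                then (LEAST l. l \<in> qv_set r (length w) \<and> k < l \<and> \<bar>letter w l\<bar> = \<bar>letter w k\<bar>)
                else int (length w) + 1)"

definition exch :: "nat \<Rightarrow> int list \<Rightarrow> int \<Rightarrow> bool" where
  "exch r w k \<longleftrightarrow> k \<in> qv_set r (length w) \<and> nxt r w k \<in> qv_set r (length w)"

definition horiz :: "nat \<Rightarrow> int list \<Rightarrow> int \<Rightarrow> int \<Rightarrow> bool" where
  "horiz r w k l \<longleftrightarrow> l = nxt r w k"

definition incl :: "nat \<Rightarrow> (nat \<Rightarrow> nat \<Rightarrow> int) \<Rightarrow> int list \<Rightarrow> int \<Rightarrow> int \<Rightarrow> bool" where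
  "incl r A w k l \<longleftrightarrow>
     dyn_adj r A (nat \<bar>letter w k\<bar>) (nat \<bar>letter w l\<bar>) \<and>
     ((l < nxt r w k \<and> nxt r w k < nxt r w l \<and> sgn (letter w l) = sgn (letter w (nxt r w k))) \<or>
      (l < nxt r w l \<and> nxt r w l < nxt r w k \<and> sgn (letter w l) = - sgn (letter w (nxt r w l))))"

text \<open>For k < l: there is an arrow between k and l.\<close>
definition bfz_conn :: "nat \<Rightarrow> (nat \<Rightarrow> nat \<Rightarrow> int) \<Rightarrow> int list \<Rightarrow> int \<Rightarrow> int \<Rightarrow> bool" where
  "bfz_conn r A w k l \<longleftrightarrow> (exch r w k \<or> exch r w l) \<and> (horiz r w k l \<or> incl r A w k l)"

text \<open>For k < l connected: the arrow is directed k -> l.\<close>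
definition bfz_fwd :: "nat \<Rightarrow> (nat \<Rightarrow> nat \<Rightarrow> int) \<Rightarrow> int list \<Rightarrow> int \<Rightarrow> int \<Rightarrow> bool" where
  "bfz_fwd r A w k l \<longleftrightarrow>
     (horiz r w k l \<and> sgn (letter w l) = 1) \<or> (incl r A w k l \<and> sgn (letter w l) = -1)"

definition bfz_arrow :: "nat \<Rightarrow> (nat \<Rightarrow> nat \<Rightarrow> int) \<Rightarrow> int list \<Rightarrow> int \<Rightarrow> int \<Rightarrow> bool" where
  "bfz_arrow r A w p q \<longleftrightarrow> p \<in> qv_set r (length w) \<and> q \<in> qv_set r (length w) \<and>
     ((p < q \<and> bfz_conn r A w p q \<and> bfz_fwd r A w p q) \<or>
      (q < p \<and> bfz_conn r A w q p \<and> \<not> bfz_fwd r A w q p))"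

text \<open>Points of the cylinder: Str x t is the point (x,t) on the string over vertex x;
  Edg a b s t (a < b, 0 < s < 1) is the point at height t lying over the interior point
  of the edge {a,b} at fraction s of the way from a to b.\<close>
datatype cyl_pt = Str nat real | Edg nat nat real real

definition seg :: "nat \<Rightarrow> real \<Rightarrow> nat \<Rightarrow> real \<Rightarrow> cyl_pt set" where
  "seg x h1 y h2 =
    (if x = y then {Str x t | t. min h1 h2 \<le> t \<and> t \<le> max h1 h2}
     else if x < y then {Str x h1, Str y h2} \<union> {Edg x y s (h1 + s * (h2 - h1)) | s. 0 < s \<and> s < 1}
     else {Str x h1, Str y h2} \<union> {Edg y x s (h2 + s * (h1 - h2)) | s. 0 < s \<and> s < 1})"

definition vpos :: "int list \<Rightarrow> int \<Rightarrow> cyl_pt" where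
  "vpos w k = Str (nat \<bar>letter w k\<bar>) (of_int k)"

definition arrow_seg :: "int list \<Rightarrow> int \<Rightarrow> int \<Rightarrow> cyl_pt set" where
  "arrow_seg w p q = seg (nat \<bar>letter w p\<bar>) (of_int p) (nat \<bar>letter w q\<bar>) (of_int q)"

text \<open>A branch: a path P = [x0,...,xn] in \<Gamma> whose end vertices are endpoints or branching
  points and whose interior vertices are neither (degree 2). Closed branches (x0 = xn) allowed.\<close>
definition is_branch :: "nat \<Rightarrow> (nat \<Rightarrow> nat \<Rightarrow> int) \<Rightarrow> nat list \<Rightarrow> bool" where
  "is_branch r A P \<longleftrightarrow> 2 \<le> length P \<and> distinct (tl P) \<and> distinct (butlast P) \<and>
     (\<forall>j. Suc j < length P \<longrightarrow> dyn_adj r A (P ! j) (P ! Suc j)) \<and>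
     (dyn_deg r A (hd P) = 1 \<or> dyn_deg r A (hd P) > 2) \<and>
     (dyn_deg r A (last P) = 1 \<or> dyn_deg r A (last P) > 2) \<and>
     (\<forall>j. 0 < j \<and> j + 1 < length P \<longrightarrow> dyn_deg r A (P ! j) = 2)"

definition sheet_pts :: "nat list \<Rightarrow> cyl_pt set" where
  "sheet_pts P = {Str x t | x t. x \<in> set P} \<union>
     {Edg a b s t | a b s t. \<exists>j. Suc j < length P \<and> {a, b} = {P ! j, P ! Suc j} \<and> a < b \<and> 0 < s \<and> s < 1}"

end

theory Submission
  imports Defs
begin

text \<open>Every arrow
  between \<open>k < l\<close> satisfies \<open>l \<le> k\<^sup>+\<close>: horizontal arrows join \<open>k\<close> to \<open>k\<^sup>+\<close> and inclined ones
  end before \<open>k\<^sup>+\<close>. Call a segment with this property an arc. Two arcs on one string overlap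
  at most in a common end, since neither can contain the lower end of the other in its
  interior. Two arcs in the strip over an edge can only meet at an interior point if their ends
  interleave, \<open>\<alpha> < \<alpha>'\<close> on one string and \<open>\<beta>' < \<beta>\<close> on the other, and the arc property rules this
  out. As a point of a strip lies over a single edge, no two arrows cross anywhere on the
  cylinder, which is stronger than planarity of each sheet; nothing about the Cartan matrix or
  the reducedness of the words is needed.\<close>

text \<open>\<open>S\<close> assigns each vertex its string; the last conjunct says \<open>l \<le> k\<^sup>+\<close>.\<close>

definition arc :: "(int \<Rightarrow> nat) \<Rightarrow> int set \<Rightarrow> int \<Rightarrow> int \<Rightarrow> bool" where
  "arc S Q k l \<longleftrightarrow> k < l \<and> k \<in> Q \<and> l \<in> Q \<and> (\<forall>e\<in>Q. S e = S k \<and> k < e \<longrightarrow> l \<le> e)"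

definition arc_seg :: "(int \<Rightarrow> nat) \<Rightarrow> int \<Rightarrow> int \<Rightarrow> cyl_pt set" where
  "arc_seg S k l = seg (S k) (of_int k) (S l) (of_int l)"

lemma arc_end_le:
  assumes "arc S Q k l" "\<alpha> \<in> {k, l}" "e \<in> Q" "S e = S \<alpha>" "\<alpha> < e"
  shows "l \<le> e"
  using assms unfolding arc_def by auto

lemma seg_commute: "seg x h y h' = seg y h' x h"
  unfolding seg_def by (auto simp: min.commute max.commute)

lemma Str_in_arc_seg:
  assumes "Str x t \<in> arc_seg S k l" "k < l"
  shows "(\<exists>e\<in>{k, l}. x = S e \<and> t = of_int e) \<or>
    (S k = S l \<and> x = S k \<and> of_int k < t \<and> t < of_int l)"
  using assms unfolding arc_seg_def seg_def by (auto split: if_splits)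

lemma Edg_in_arc_seg:
  assumes "Edg a b s t \<in> arc_seg S k l"
  shows "\<exists>\<alpha> \<beta>. {k, l} = {\<alpha>, \<beta>} \<and> S \<alpha> = a \<and> S \<beta> = b \<and> a < b \<and> 0 < s \<and> s < 1 \<and>
    t = (1 - s) * of_int \<alpha> + s * of_int \<beta>"
  using assms unfolding arc_seg_def seg_def by (auto simp: algebra_simps split: if_splits)

lemma arcs_overlapping_on_string_eq:
  assumes arc: "arc S Q k l" and arc': "arc S Q k' l'" and "S k = S k'" "S l = S k" "S l' = S k'"
    and "of_int k < t" "t < of_int l" "of_int k' < t" "t < (of_int l' :: real)"
  shows "k = k' \<and> l = l'"
proof -
  have Q: "k \<in> Q" "l \<in> Q" "k' \<in> Q" "l' \<in> Q" using arc arc' by (auto simp: arc_def)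
  have "k < l'" "k' < l" using assms(6-9) by linarith+
  have "\<not> k < k'"
  proof
    assume "k < k'"
    then have "l \<le> k'" using arc_end_le[OF arc _ Q(3), where \<alpha> = k] assms(3) by simp
    with assms(7,8) show False by linarith
  qed
  moreover have "\<not> k' < k"
  proof
    assume "k' < k"
    then have "l' \<le> k" using arc_end_le[OF arc' _ Q(1), where \<alpha> = k'] assms(3) by simp
    with assms(6,9) show False by linarith
  qed
  ultimately have "k = k'" by simp
  moreover have "l \<le> l'" using arc_end_le[OF arc _ Q(4), where \<alpha> = k] assms(3,5) \<open>k < l'\<close> by simp
  moreover have "l' \<le> l" using arc_end_le[OF arc' _ Q(2), where \<alpha> = k'] assms(3,4) \<open>k' < l\<close> by simp
  ultimately show ?thesis by simp
qed

lemma arcs_meet_on_string: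
  assumes arc: "arc S Q k l" and arc': "arc S Q k' l'" and ne: "{k, l} \<noteq> {k', l'}"
    and "Str x t \<in> arc_seg S k l" "Str x t \<in> arc_seg S k' l'"
  shows "\<exists>e\<in>{k, l} \<inter> {k', l'}. x = S e \<and> t = of_int e"
proof -
  have "k < l" "k' < l'" and Q: "{k, l, k', l'} \<subseteq> Q" using arc arc' by (auto simp: arc_def)
  with assms(4,5) consider
      (ends) e e' where "e \<in> {k, l}" "e' \<in> {k', l'}" "x = S e" "t = of_int e" "x = S e'" "t = of_int e'"
    | (end_inner) e where "e \<in> {k, l}" "x = S e" "t = of_int e" "S k' = S l'" "x = S k'"
        "of_int k' < t" "t < of_int l'"
    | (inner_end) e where "e \<in> {k', l'}" "x = S e" "t = of_int e" "S k = S l" "x = S k"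
        "of_int k < t" "t < of_int l"
    | (inners) "S k = S l" "x = S k" "of_int k < t" "t < of_int l"
        "S k' = S l'" "x = S k'" "of_int k' < t" "t < of_int l'"
    by (metis Str_in_arc_seg)
  then show ?thesis
  proof cases
    case ends
    then show ?thesis by auto
  next
    case end_inner
    have "e \<in> Q" using Q \<open>e \<in> _\<close> by blast
    moreover have "S e = S k'" using end_inner(2,5) by simp
    moreover have "k' < e" "e < l'" using end_inner(3,6,7) by simp_all
    ultimately show ?thesis using arc_end_le[OF arc', of k' e] by simp
  next
    case inner_end
    have "e \<in> Q" using Q \<open>e \<in> _\<close> by blast
    moreover have "S e = S k" using inner_end(2,5) by simp
    moreover have "k < e" "e < l" using inner_end(3,6,7) by simp_all
    ultimately show ?thesis using arc_end_le[OF arc, of k e] by simp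
  next
    case inners
    have "k = k' \<and> l = l'"
      by (rule arcs_overlapping_on_string_eq[OF arc arc', of t]) (use inners in simp_all)
    with ne show ?thesis by simp
  qed
qed

lemma arcs_not_interleaved:
  assumes arc: "arc S Q k l" "{k, l} = {\<alpha>, \<beta>}" and arc': "arc S Q k' l'" "{k', l'} = {\<alpha>', \<beta>'}"
    and "S \<alpha> = a" "S \<alpha>' = a" "S \<beta> = b" "S \<beta>' = b" "a \<noteq> b"
  shows "\<not> (\<alpha> < \<alpha>' \<and> \<beta>' < \<beta>)"
proof
  assume "\<alpha> < \<alpha>' \<and> \<beta>' < \<beta>"
  moreover have "\<alpha>' \<in> Q" "\<beta> \<in> Q" "k < l" "k' < l'" using arc arc' by (auto simp: arc_def)
  ultimately have "l \<le> \<alpha>'" "l' \<le> \<beta>"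
    using arc_end_le[OF arc(1), of \<alpha> \<alpha>'] arc_end_le[OF arc'(1), of \<beta>' \<beta>] arc arc' assms(5-8)
    by (auto simp: doubleton_eq_iff)
  moreover have "\<beta> \<le> l" "\<alpha>' \<le> l'" using arc(2) arc'(2) \<open>k < l\<close> \<open>k' < l'\<close>
    by (auto simp: doubleton_eq_iff)
  ultimately have "\<alpha>' = \<beta>" \<comment> \<open>\<open>\<beta> \<le> l \<le> \<alpha>' \<le> l' \<le> \<beta>\<close>\<close>
    by simp
  with assms(6,7,9) show False by simp
qed

lemma convex_combinations_eq_imp_eq:
  fixes x x' y y' s :: real
  assumes "0 < s" "s < 1" "(1 - s) * x + s * y = (1 - s) * x' + s * y'"
    and "\<not> (x < x' \<and> y' < y)" "\<not> (x' < x \<and> y < y')"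
  shows "x = x' \<and> y = y'"
proof -
  have sum: "(1 - s) * (x - x') + s * (y - y') = 0" using assms(3) by (simp add: algebra_simps)
  have "\<not> x' < x"
  proof
    assume "x' < x"
    then have "0 < (1 - s) * (x - x')" "0 \<le> s * (y - y')" using assms(1,2,5) by simp_all
    with sum show False by linarith
  qed
  moreover have "\<not> x < x'"
  proof
    assume "x < x'"
    then have "(1 - s) * (x - x') < 0" "s * (y - y') \<le> 0"
      using assms(1,2,4) by (simp_all add: mult_pos_neg mult_nonneg_nonpos)
    with sum show False by linarith
  qed
  ultimately have "x = x'" by simp
  with sum assms(1) show ?thesis by simp
qed

lemma arcs_disjoint_in_strips:
  assumes arc: "arc S Q k l" and arc': "arc S Q k' l'" and ne: "{k, l} \<noteq> {k', l'}"
    and "Edg a b s t \<in> arc_seg S k l" "Edg a b s t \<in> arc_seg S k' l'"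
  shows False
proof -
  obtain \<alpha> \<beta> where ends: "{k, l} = {\<alpha>, \<beta>}" "S \<alpha> = a" "S \<beta> = b" "a < b" "0 < s" "s < 1"
      and t: "t = (1 - s) * of_int \<alpha> + s * of_int \<beta>"
    using Edg_in_arc_seg[OF assms(4)] by blast
  obtain \<alpha>' \<beta>' where ends': "{k', l'} = {\<alpha>', \<beta>'}" "S \<alpha>' = a" "S \<beta>' = b"
      and t': "t = (1 - s) * of_int \<alpha>' + s * of_int \<beta>'"
    using Edg_in_arc_seg[OF assms(5)] by blast
  have "a \<noteq> b" using ends(4) by simp
  have "\<not> (\<alpha> < \<alpha>' \<and> \<beta>' < \<beta>)"
    by (rule arcs_not_interleaved[OF arc ends(1) arc' ends'(1) ends(2) ends'(2) ends(3) ends'(3)]) fact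
  moreover have "\<not> (\<alpha>' < \<alpha> \<and> \<beta> < \<beta>')"
    by (rule arcs_not_interleaved[OF arc' ends'(1) arc ends(1) ends'(2) ends(2) ends'(3) ends(3)]) fact
  moreover have "(1 - s) * of_int \<alpha> + s * of_int \<beta> = (1 - s) * of_int \<alpha>' + s * (of_int \<beta>' :: real)"
    using t t' by linarith
  ultimately have "of_int \<alpha> = (of_int \<alpha>' :: real) \<and> of_int \<beta> = (of_int \<beta>' :: real)"
    by (intro convex_combinations_eq_imp_eq[OF ends(5,6)]) simp_all
  then have "\<alpha> = \<alpha>'" "\<beta> = \<beta>'" by simp_all
  with ends(1) ends'(1) ne show False by simp
qed

lemma arcs_meet_at_common_end:
  assumes "arc S Q k l" "arc S Q k' l'" "{k, l} \<noteq> {k', l'}"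
    and "z \<in> arc_seg S k l" "z \<in> arc_seg S k' l'"
  shows "\<exists>e\<in>{k, l} \<inter> {k', l'}. z = Str (S e) (of_int e)"
proof (cases z)
  case (Str x t)
  then show ?thesis using arcs_meet_on_string[OF assms(1-3)] assms(4,5) by blast
next
  case (Edg a b s t)
  then show ?thesis using arcs_disjoint_in_strips[OF assms(1-3)] assms(4,5) by blast
qed

definition string_at :: "int list \<Rightarrow> int \<Rightarrow> nat" where
  "string_at w k = nat \<bar>letter w k\<bar>"

lemma string_at_eq_iff: "string_at w k = string_at w l \<longleftrightarrow> \<bar>letter w k\<bar> = \<bar>letter w l\<bar>"
  unfolding string_at_def by (simp add: eq_nat_nat_iff)

lemma nxt_le:
  assumes "k < e" "e \<in> qv_set r (length w)" "\<bar>letter w e\<bar> = \<bar>letter w k\<bar>"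
  shows "nxt r w k \<le> e"
proof -
  define P where "P l \<longleftrightarrow> l \<in> qv_set r (length w) \<and> k < l \<and> \<bar>letter w l\<bar> = \<bar>letter w k\<bar>" for l
  have "P e" using assms unfolding P_def by simp
  have fin: "finite (Collect P)" unfolding P_def qv_set_def by simp
  have "(LEAST l. P l) = Min (Collect P)"
    by (rule Least_equality) (use Min_in[OF fin] Min_le[OF fin] \<open>P e\<close> in auto)
  moreover have "nxt r w k = (LEAST l. P l)" using \<open>P e\<close> unfolding nxt_def P_def by auto
  ultimately show ?thesis using Min_le[OF fin] \<open>P e\<close> by simp
qed

lemma bfz_conn_le_nxt: "bfz_conn r A w k l \<Longrightarrow> l \<le> nxt r w k"
  unfolding bfz_conn_def horiz_def incl_def by auto

lemma arc_if_bfz_conn: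
  assumes "k < l" "k \<in> qv_set r (length w)" "l \<in> qv_set r (length w)" "bfz_conn r A w k l"
  shows "arc (string_at w) (qv_set r (length w)) k l"
proof -
  have "l \<le> e" if "e \<in> qv_set r (length w)" "string_at w e = string_at w k" "k < e" for e
  proof -
    have "nxt r w k \<le> e" using nxt_le that string_at_eq_iff by metis
    then show ?thesis using bfz_conn_le_nxt[OF assms(4)] by simp
  qed
  with assms(1-3) show ?thesis unfolding arc_def by blast
qed

lemma bfz_arrow_arc:
  assumes "bfz_arrow r A w p q"
  obtains k l where "{p, q} = {k, l}" "arc (string_at w) (qv_set r (length w)) k l"
    "arrow_seg w p q = arc_seg (string_at w) k l"
proof -
  have Q: "p \<in> qv_set r (length w)" "q \<in> qv_set r (length w)"
    and "p < q \<and> bfz_conn r A w p q \<or> q < p \<and> bfz_conn r A w q p"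
    using assms unfolding bfz_arrow_def by auto
  then show thesis
  proof (elim disjE conjE)
    assume "p < q" "bfz_conn r A w p q"
    then show thesis
      using that[of p q] arc_if_bfz_conn Q unfolding arrow_seg_def arc_seg_def string_at_def
      by blast
  next
    assume "q < p" "bfz_conn r A w q p"
    then show thesis
      using that[of q p] arc_if_bfz_conn Q unfolding arrow_seg_def arc_seg_def string_at_def
      by (metis insert_commute seg_commute)
  qed
qed

theorem mainTheorem2:
  fixes r :: nat and A :: "nat \<Rightarrow> nat \<Rightarrow> int" and su sv :: "nat list"
    and w :: "int list" and P :: "nat list" and p q p' q' :: int
  assumes "is_GCM r A"
    and "reduced_word r A su" and "reduced_word r A sv"
    and "w \<in> shuffles (map (\<lambda>j. - int j) su) (map int sv)"
    and "is_branch r A P"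
    and "bfz_arrow r A w p q" and "bfz_arrow r A w p' q'" and "{p, q} \<noteq> {p', q'}"
    and "arrow_seg w p q \<subseteq> sheet_pts P" and "arrow_seg w p' q' \<subseteq> sheet_pts P"
  shows "arrow_seg w p q \<inter> arrow_seg w p' q' \<subseteq> vpos w ` ({p, q} \<inter> {p', q'})"
proof
  obtain k l where kl: "{p, q} = {k, l}" "arc (string_at w) (qv_set r (length w)) k l"
      "arrow_seg w p q = arc_seg (string_at w) k l"
    using bfz_arrow_arc[OF assms(6)] .
  obtain k' l' where kl': "{p', q'} = {k', l'}" "arc (string_at w) (qv_set r (length w)) k' l'"
      "arrow_seg w p' q' = arc_seg (string_at w) k' l'"
    using bfz_arrow_arc[OF assms(7)] .
  fix z
  assume "z \<in> arrow_seg w p q \<inter> arrow_seg w p' q'"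
  then obtain e where "e \<in> {p, q} \<inter> {p', q'}" "z = Str (string_at w e) (of_int e)"
    using arcs_meet_at_common_end[OF kl(2) kl'(2)] kl kl' assms(8) by auto
  then show "z \<in> vpos w ` ({p, q} \<inter> {p', q'})"
    unfolding vpos_def string_at_def by blast
qed

end
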